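(* Let $f\in\mathcal D$ (entire or model) and suppose $f$ satisfies the balanced growth condition on $\Omega$: there is $\rho>0$ (the order of $f$ when $f$ is entire) such that $|f'(z)|\asymp|f(z)||z|^{\rho-1}$ for $z\in\Omega$. Then $\beta_\infty\equiv0$, hence $b_\infty(t)=1-t$ for all $t\in\mathbb R$; in particular $f$ has negative spectrum and $\Theta_f=1$.
   Context: $\mathbb D=\{|z|<1\}$, $\mathbb D^*=\{|z|>1\}$, $\mathcal H=\{\Re\xi>0\}$, $Q_T=\{0<\Re\xi<4T,|\Im\xi|<4T\}$. Class $\mathcal D$: either an entire $f$ with $S(f)$ (closure of critical and finite asymptotic values) in $\mathbb D$ and finitely many components $\Omega_1,\dots,\Omega_N$ of $f^{-1}(\mathbb D^* )$ ($f=\exp\circ\tau_j$ on $\Omega_j$, $\tau_j$ conformal onto $\mathcal H$), or a model function $f=e^{\tau_j}$ on a finite disjoint union $\Omega=\bigcup\Omega_j$ of unbounded simply connected domains with conformal $\tau_j$ onto $\mathcal H$ whose inverses $\varphi_j$ satisfy $|\varphi_j(\xi_n)|\to\infty$ as $|\xi_n|\to\infty$; in both cases $\overline\Omega\cap\overline{\mathbb D}=\emptyset$ and for each $j$ there is $M$ with $|\varphi_j(\xi)|\le M|\varphi_j(\xi')|$ for $\xi,\xi'\in Q_T\setminus Q_{T/8}$, $T$ large. Spectrum: $\varphi_{j,T}(\xi)=\varphi_j(T\xi)/|\varphi_j(T)|$, $\beta_h(r,t)=\log\int_I|h'(r+iy)|^tdy/\log(1/r)$ with $I=[-2,-1]\cup[1,2]$,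 $\beta_\infty=\max_j\limsup_{T\to\infty}\beta_{\varphi_{j,T}}(1/T,t)$, $b_\infty(t)=\beta_\infty(t)-t+1$, $\Theta_f=\max_j$(smallest positive zero of $\beta_{\infty,j}-t+1$); negative spectrum: $b_\infty(t)<0$ for $t>\Theta_f$. $A\asymp B$: ratio bounded above and below by positive constants. *)

theory Defs
  imports "HOL-Analysis.Analysis"
begin

definition right_half_plane :: "complex set" where
  "right_half_plane = {\<xi>. 0 < Re \<xi>}"

definition Qsq :: "real \<Rightarrow> complex set" where
  "Qsq T = {\<xi>. 0 < Re \<xi> \<and> Re \<xi> < 4 * T \<and> \<bar>Im \<xi>\<bar> < 4 * T}"

definition critical_values :: "(complex \<Rightarrow> complex) \<Rightarrow> complex set" where
  "critical_values f = {f z | z. deriv f z = 0}"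

definition asymptotic_values :: "(complex \<Rightarrow> complex) \<Rightarrow> complex set" where
  "asymptotic_values f = {a. \<exists>\<gamma> :: real \<Rightarrow> complex.
      continuous_on {0..<1} \<gamma> \<and>
      filterlim (\<lambda>s. norm (\<gamma> s)) at_top (at_left 1) \<and>
      ((\<lambda>s. f (\<gamma> s)) \<longlongrightarrow> a) (at_left 1)}"

definition singular_set :: "(complex \<Rightarrow> complex) \<Rightarrow> complex set" where
  "singular_set f = closure (critical_values f \<union> asymptotic_values f)"

definition conformal_onto_H ::
  "complex set \<Rightarrow> (complex \<Rightarrow> complex) \<Rightarrow> (complex \<Rightarrow> complex) \<Rightarrow> bool" where
  "conformal_onto_H U \<tau> \<phi> \<longleftrightarrow>
     \<tau> holomorphic_on U \<and> \<phi> holomorphic_on right_half_plane \<and>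
     \<tau> ` U = right_half_plane \<and> \<phi> ` right_half_plane = U \<and>
     (\<forall>z\<in>U. \<phi> (\<tau> z) = z) \<and> (\<forall>\<xi>\<in>right_half_plane. \<tau> (\<phi> \<xi>) = \<xi>)"

definition common_D_conditions ::
  "(complex \<Rightarrow> complex) \<Rightarrow> nat \<Rightarrow> (nat \<Rightarrow> complex set) \<Rightarrow>
   (nat \<Rightarrow> complex \<Rightarrow> complex) \<Rightarrow> (nat \<Rightarrow> complex \<Rightarrow> complex) \<Rightarrow> bool" where
  "common_D_conditions f N \<Omega> \<tau> \<phi> \<longleftrightarrow>
     1 \<le> N \<and>
     (\<forall>j<N. conformal_onto_H (\<Omega> j) (\<tau> j) (\<phi> j)) \<and>
     (\<forall>j<N. \<forall>z\<in>\<Omega> j. f z = exp (\<tau> j z)) \<and>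
     closure (\<Union>j<N. \<Omega> j) \<inter> cball 0 1 = {} \<and>
     (\<forall>j<N. \<exists>M. \<exists>T0. \<forall>T\<ge>T0. \<forall>\<xi>\<in>Qsq T - Qsq (T/8). \<forall>\<xi>'\<in>Qsq T - Qsq (T/8).
         norm (\<phi> j \<xi>) \<le> M * norm (\<phi> j \<xi>'))"

definition class_D_entire ::
  "(complex \<Rightarrow> complex) \<Rightarrow> nat \<Rightarrow> (nat \<Rightarrow> complex set) \<Rightarrow>
   (nat \<Rightarrow> complex \<Rightarrow> complex) \<Rightarrow> (nat \<Rightarrow> complex \<Rightarrow> complex) \<Rightarrow> bool" where
  "class_D_entire f N \<Omega> \<tau> \<phi> \<longleftrightarrow>
     f holomorphic_on UNIV \<and>
     singular_set f \<subseteq> ball 0 1 \<and>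
     inj_on \<Omega> {..<N} \<and>
     \<Omega> ` {..<N} = components {z. 1 < norm (f z)} \<and>
     common_D_conditions f N \<Omega> \<tau> \<phi>"

definition class_D_model ::
  "(complex \<Rightarrow> complex) \<Rightarrow> nat \<Rightarrow> (nat \<Rightarrow> complex set) \<Rightarrow>
   (nat \<Rightarrow> complex \<Rightarrow> complex) \<Rightarrow> (nat \<Rightarrow> complex \<Rightarrow> complex) \<Rightarrow> bool" where
  "class_D_model f N \<Omega> \<tau> \<phi> \<longleftrightarrow>
     (\<forall>j<N. open (\<Omega> j) \<and> connected (\<Omega> j) \<and> \<Omega> j \<noteq> {} \<and>
            \<not> bounded (\<Omega> j) \<and> simply_connected (\<Omega> j)) \<and>
     (\<forall>i<N. \<forall>j<N. i \<noteq> j \<longrightarrow> \<Omega> i \<inter> \<Omega> j = {}) \<and>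
     (\<forall>j<N. \<forall>\<xi> :: nat \<Rightarrow> complex. (\<forall>n. \<xi> n \<in> right_half_plane) \<longrightarrow>
          filterlim (\<lambda>n. norm (\<xi> n)) at_top sequentially \<longrightarrow>
          filterlim (\<lambda>n. norm (\<phi> j (\<xi> n))) at_top sequentially) \<and>
     common_D_conditions f N \<Omega> \<tau> \<phi>"

definition class_D ::
  "(complex \<Rightarrow> complex) \<Rightarrow> nat \<Rightarrow> (nat \<Rightarrow> complex set) \<Rightarrow>
   (nat \<Rightarrow> complex \<Rightarrow> complex) \<Rightarrow> (nat \<Rightarrow> complex \<Rightarrow> complex) \<Rightarrow> bool" where
  "class_D f N \<Omega> \<tau> \<phi> \<longleftrightarrow> class_D_entire f N \<Omega> \<tau> \<phi> \<or> class_D_model f N \<Omega> \<tau> \<phi>"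

definition balanced_growth :: "(complex \<Rightarrow> complex) \<Rightarrow> complex set \<Rightarrow> bool" where
  "balanced_growth f U \<longleftrightarrow> (\<exists>\<rho>>0. \<exists>c>0. \<exists>C>0. \<forall>z\<in>U.
      c * (norm (f z) * norm z powr (\<rho> - 1)) \<le> norm (deriv f z) \<and>
      norm (deriv f z) \<le> C * (norm (f z) * norm z powr (\<rho> - 1)))"

definition Iset :: "real set" where
  "Iset = {-2..-1} \<union> {1..2}"

definition beta_fun :: "(complex \<Rightarrow> complex) \<Rightarrow> real \<Rightarrow> real \<Rightarrow> real" where
  "beta_fun h r t =
     ln (integral Iset (\<lambda>y. norm (deriv h (Complex r y)) powr t)) / ln (1 / r)"

definition phi_rescaled :: "(complex \<Rightarrow> complex) \<Rightarrow> real \<Rightarrow> complex \<Rightarrow> complex" where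
  "phi_rescaled \<phi>j T \<xi> = \<phi>j (of_real T * \<xi>) / of_real (norm (\<phi>j (of_real T)))"

definition beta_inf_j :: "(complex \<Rightarrow> complex) \<Rightarrow> real \<Rightarrow> ereal" where
  "beta_inf_j \<phi>j t = Limsup at_top (\<lambda>T. ereal (beta_fun (phi_rescaled \<phi>j T) (1 / T) t))"

definition beta_inf :: "nat \<Rightarrow> (nat \<Rightarrow> complex \<Rightarrow> complex) \<Rightarrow> real \<Rightarrow> ereal" where
  "beta_inf N \<phi> t = Max ((\<lambda>j. beta_inf_j (\<phi> j) t) ` {..<N})"

definition b_inf :: "nat \<Rightarrow> (nat \<Rightarrow> complex \<Rightarrow> complex) \<Rightarrow> real \<Rightarrow> ereal" where
  "b_inf N \<phi> t = beta_inf N \<phi> t - ereal t + 1"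

definition Theta_j :: "(complex \<Rightarrow> complex) \<Rightarrow> real" where
  "Theta_j \<phi>j = Inf {t. 0 < t \<and> beta_inf_j \<phi>j t - ereal t + 1 = 0}"

definition Theta :: "nat \<Rightarrow> (nat \<Rightarrow> complex \<Rightarrow> complex) \<Rightarrow> real" where
  "Theta N \<phi> = Max ((\<lambda>j. Theta_j (\<phi> j)) ` {..<N})"

definition negative_spectrum :: "nat \<Rightarrow> (nat \<Rightarrow> complex \<Rightarrow> complex) \<Rightarrow> bool" where
  "negative_spectrum N \<phi> \<longleftrightarrow> (\<forall>t > Theta N \<phi>. b_inf N \<phi> t < 0)"

end

theory Submission
  imports Defs "HOL-Complex_Analysis.Complex_Analysis"
begin

text \<open>On a tract write \<open>f = exp \<circ> \<tau>\<close> and \<open>\<phi> = \<tau>\<inverse>\<close>. Since \<open>f' = f \<tau>'\<close> and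
  \<open>\<phi>' = 1 / (\<tau>' \<circ> \<phi>)\<close>, balanced growth becomes \<open>|\<phi>'(\<xi>)| \<asymp> |\<phi>(\<xi>)|\<^sup>1\<^sup>-\<^sup>\<rho>\<close> on the
  half plane. Integrating along the real axis gives \<open>|\<phi>(T)|\<^sup>\<rho> \<lesssim> T\<close>. Cauchy's estimate on
  the disc of radius \<open>T/4\<close> about \<open>T\<close>, where \<open>|\<phi>|\<close> is comparable to \<open>|\<phi>(T)|\<close> by the
  regularity of \<open>\<phi>\<close> on \<open>Q(T) - Q(T/8)\<close>, gives \<open>T \<lesssim> |\<phi>(T)|\<^sup>\<rho>\<close>. So on the segment
  \<open>Re \<xi> = 1/T, Im \<xi> \<in> I\<close> the derivative of the rescaled map \<open>\<phi>(T\<xi>) / |\<phi>(T)|\<close> is bounded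
  above and below independently of \<open>T\<close>, whence \<open>\<beta>(1/T, t) = O(1 / log T) \<rightarrow> 0\<close>.\<close>

lemma open_right_half_plane: "open right_half_plane"
  unfolding right_half_plane_def by (rule open_halfspace_Re_gt)

lemma Qsq_subset_right_half_plane: "Qsq T \<subseteq> right_half_plane"
  by (auto simp: Qsq_def right_half_plane_def)

lemma of_real_mem_Qsq_annulus: "0 < T \<Longrightarrow> complex_of_real T \<in> Qsq T - Qsq (T/8)"
  by (simp add: Qsq_def)

lemma cball_of_real_subset_Qsq_annulus:
  assumes "0 < T"
  shows "cball (complex_of_real T) (T/4) \<subseteq> Qsq T - Qsq (T/8)"
proof
  fix x assume "x \<in> cball (complex_of_real T) (T/4)"
  then have "norm (complex_of_real T - x) \<le> T/4" by (simp add: dist_norm)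
  then have "\<bar>T - Re x\<bar> \<le> T/4" "\<bar>Im x\<bar> \<le> T/4"
    using abs_Re_le_cmod[of "complex_of_real T - x"] abs_Im_le_cmod[of "complex_of_real T - x"]
    by auto
  then have "3 * T / 4 \<le> Re x" "Re x \<le> 5 * T / 4" "\<bar>Im x\<bar> \<le> T/4" by arith+
  then show "x \<in> Qsq T - Qsq (T/8)" using assms by (auto simp: Qsq_def)
qed

lemma Complex_mem_Qsq_annulus:
  assumes "1 \<le> T" "1 \<le> \<bar>y\<bar>" "\<bar>y\<bar> \<le> 2"
  shows "Complex 1 (T * y) \<in> Qsq T - Qsq (T/8)"
proof -
  have "T \<le> \<bar>T * y\<bar>" "\<bar>T * y\<bar> \<le> 2 * T"
    using assms mult_left_mono[of 1 "\<bar>y\<bar>" T] mult_left_mono[of "\<bar>y\<bar>" 2 T]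
    by (auto simp: abs_mult)
  then show ?thesis using assms(1) by (auto simp: Qsq_def)
qed

lemma powr_le_mult_powr_abs:
  fixes x y M e :: real
  assumes "0 < x" "0 < y" "1 \<le> M" "x \<le> M * y" "y \<le> M * x"
  shows "x powr e \<le> M powr \<bar>e\<bar> * y powr e"
proof (cases "0 \<le> e")
  case True
  have "x powr e \<le> (M * y) powr e" using assms True by (intro powr_mono2) auto
  also have "\<dots> = M powr \<bar>e\<bar> * y powr e" using assms True by (simp add: powr_mult)
  finally show ?thesis .
next
  case False
  have "y / M \<le> x" using assms by (simp add: divide_le_eq mult.commute)
  then have "x powr e \<le> (y / M) powr e" using assms False by (intro powr_mono2') auto
  also have "\<dots> = y powr e / M powr e" using assms by (simp add: powr_divide)
  also have "\<dots> = M powr \<bar>e\<bar> * y powr e"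
    using assms False by (simp add: powr_minus divide_inverse)
  finally show ?thesis .
qed

lemma powr_between_min_max:
  fixes u a b t :: real
  assumes "0 < a" "a \<le> u" "u \<le> b"
  shows "min (a powr t) (b powr t) \<le> u powr t \<and> u powr t \<le> max (a powr t) (b powr t)"
proof (cases "0 \<le> t")
  case True
  then have "a powr t \<le> u powr t" "u powr t \<le> b powr t" using assms by (auto intro: powr_mono2)
  then show ?thesis by auto
next
  case False
  then have "u powr t \<le> a powr t" "b powr t \<le> u powr t" using assms by (auto intro: powr_mono2')
  then show ?thesis by auto
qed

lemma deriv_conformal_inverse:
  assumes conf: "conformal_onto_H U \<tau> \<phi>" and "open U" and \<xi>: "\<xi> \<in> right_half_plane"
  shows "deriv \<tau> (\<phi> \<xi>) * deriv \<phi> \<xi> = 1"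
proof -
  note cf = conf[unfolded conformal_onto_H_def]
  have "\<phi> \<xi> \<in> U" using cf \<xi> by blast
  then have "(\<tau> has_field_derivative deriv \<tau> (\<phi> \<xi>)) (at (\<phi> \<xi>))"
    using cf \<open>open U\<close> by (intro holomorphic_derivI) auto
  moreover have "(\<phi> has_field_derivative deriv \<phi> \<xi>) (at \<xi>)"
    using cf open_right_half_plane \<xi> by (intro holomorphic_derivI) auto
  ultimately have "((\<tau> \<circ> \<phi>) has_field_derivative deriv \<tau> (\<phi> \<xi>) * deriv \<phi> \<xi>) (at \<xi>)"
    by (rule DERIV_chain)
  then have "((\<lambda>x. x) has_field_derivative deriv \<tau> (\<phi> \<xi>) * deriv \<phi> \<xi>) (at \<xi>)"
    by (rule has_field_derivative_transform_within_open[OF _ open_right_half_plane \<xi>])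
       (use cf in auto)
  then show ?thesis using DERIV_ident DERIV_unique by blast
qed

lemma deriv_eq_exp_comp:
  assumes "\<tau> holomorphic_on U" "open U" "z \<in> U" "\<forall>z\<in>U. f z = exp (\<tau> z)"
  shows "deriv f z = exp (\<tau> z) * deriv \<tau> z"
proof -
  have "(\<tau> has_field_derivative deriv \<tau> z) (at z)"
    using assms by (intro holomorphic_derivI) auto
  then have "((\<lambda>x. exp (\<tau> x)) has_field_derivative exp (\<tau> z) * deriv \<tau> z) (at z)"
    using DERIV_chain[OF DERIV_exp] by (simp add: o_def)
  then have "(f has_field_derivative exp (\<tau> z) * deriv \<tau> z) (at z)"
    by (rule has_field_derivative_transform_within_open[OF _ assms(2,3)]) (use assms(4) in auto)
  then show ?thesis by (rule DERIV_imp_deriv)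
qed

lemma balanced_growth_inverse_deriv_bounds:
  assumes conf: "conformal_onto_H U \<tau> \<phi>" and "open U"
    and f_eq: "\<forall>z\<in>U. f z = exp (\<tau> z)" and "0 \<notin> U"
    and "0 < c" "0 < C"
    and bg: "\<forall>z\<in>U. c * (norm (f z) * norm z powr (\<rho> - 1)) \<le> norm (deriv f z) \<and>
                     norm (deriv f z) \<le> C * (norm (f z) * norm z powr (\<rho> - 1))"
    and \<xi>: "\<xi> \<in> right_half_plane"
  shows "norm (\<phi> \<xi>) powr (1 - \<rho>) / C \<le> norm (deriv \<phi> \<xi>)"
    and "norm (deriv \<phi> \<xi>) \<le> norm (\<phi> \<xi>) powr (1 - \<rho>) / c"
proof -
  note cf = conf[unfolded conformal_onto_H_def]
  define z where "z = \<phi> \<xi>"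
  have z: "z \<in> U" using cf \<xi> by (auto simp: z_def)
  define P where "P = norm z powr (\<rho> - 1)"
  have "0 < P" using \<open>0 \<notin> U\<close> z by (auto simp: P_def)
  have inv_P: "norm z powr (1 - \<rho>) = 1 / P"
    by (simp add: P_def powr_minus_divide[symmetric])
  have "deriv f z = exp (\<tau> z) * deriv \<tau> z"
    using cf z f_eq \<open>open U\<close> by (intro deriv_eq_exp_comp) auto
  then have bounds: "c * P \<le> norm (deriv \<tau> z)" "norm (deriv \<tau> z) \<le> C * P"
    using bg z f_eq by (auto simp: norm_mult P_def mult.left_commute)
  then have deriv_\<tau>_pos: "0 < norm (deriv \<tau> z)" using \<open>0 < P\<close> \<open>0 < c\<close> by (smt (verit) mult_pos_pos)
  then have deriv_\<phi>: "norm (deriv \<phi> \<xi>) = 1 / norm (deriv \<tau> z)"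
    using arg_cong[OF deriv_conformal_inverse[OF conf \<open>open U\<close> \<xi>], of norm]
    by (simp add: z_def norm_mult eq_divide_eq mult.commute)
  show "norm (\<phi> \<xi>) powr (1 - \<rho>) / C \<le> norm (deriv \<phi> \<xi>)"
    using bounds deriv_\<tau>_pos
    by (simp add: deriv_\<phi> z_def[symmetric] inv_P divide_divide_eq_left' frac_le mult.commute)
  show "norm (deriv \<phi> \<xi>) \<le> norm (\<phi> \<xi>) powr (1 - \<rho>) / c"
    using bounds \<open>0 < P\<close> \<open>0 < c\<close>
    by (simp add: deriv_\<phi> z_def[symmetric] inv_P divide_divide_eq_left' frac_le mult.commute)
qed

lemma deriv_phi_rescaled:
  assumes "\<phi> holomorphic_on right_half_plane" "of_real T * \<xi> \<in> right_half_plane"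
  shows "deriv (phi_rescaled \<phi> T) \<xi> =
           of_real T * deriv \<phi> (of_real T * \<xi>) / of_real (norm (\<phi> (of_real T)))"
proof -
  have "(\<phi> has_field_derivative deriv \<phi> (of_real T * \<xi>)) (at (of_real T * \<xi>))"
    using assms open_right_half_plane by (intro holomorphic_derivI) auto
  from DERIV_chain2[OF this DERIV_cmult[OF DERIV_ident, of "of_real T" \<xi>]]
  have "(phi_rescaled \<phi> T has_field_derivative
          deriv \<phi> (of_real T * \<xi>) * of_real T / of_real (norm (\<phi> (of_real T)))) (at \<xi>)"
    unfolding phi_rescaled_def by (intro DERIV_cdivide) simp
  then show ?thesis by (simp add: DERIV_imp_deriv mult.commute)
qed

lemma deriv_phi_rescaled_on_line:
  assumes "\<phi> holomorphic_on right_half_plane" "0 < T"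
  shows "deriv (phi_rescaled \<phi> T) (Complex (1/T) y) =
           of_real T * deriv \<phi> (Complex 1 (T * y)) / of_real (norm (\<phi> (of_real T)))"
proof -
  have "of_real T * Complex (1/T) y = Complex 1 (T * y)"
    using assms(2) by (simp add: complex_eq_iff)
  moreover have "Complex 1 (T * y) \<in> right_half_plane" by (simp add: right_half_plane_def)
  ultimately show ?thesis using deriv_phi_rescaled[OF assms(1), of T "Complex (1/T) y"] by simp
qed

lemma integral_Iset_bounds:
  fixes h :: "real \<Rightarrow> real"
  assumes cont: "continuous_on Iset h" and bounds: "\<And>y. y \<in> Iset \<Longrightarrow> m \<le> h y \<and> h y \<le> K"
  shows "2 * m \<le> integral Iset h \<and> integral Iset h \<le> 2 * K"
proof -
  have unit_interval: "m \<le> integral {a..a+1} h \<and> integral {a..a+1} h \<le> K \<and> h integrable_on {a..a+1}"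
    if "{a..a+1} \<subseteq> Iset" for a :: real
  proof -
    have int: "h integrable_on {a..a+1}"
      using continuous_on_subset[OF cont that] by (rule integrable_continuous_real)
    have "integral {a..a+1} (\<lambda>_. m) \<le> integral {a..a+1} h"
      and "integral {a..a+1} h \<le> integral {a..a+1} (\<lambda>_. K)"
      by (intro integral_le; use int bounds that in force)+
    with int show ?thesis by simp
  qed
  have "{-2..-2+1} \<subseteq> Iset" "{1..1+1} \<subseteq> Iset" by (auto simp: Iset_def)
  from this[THEN unit_interval] show ?thesis
    by (simp add: Iset_def)
qed

lemma ln_integral_Iset_over_ln_tendsto_0:
  fixes g :: "real \<Rightarrow> real \<Rightarrow> real"
  assumes bounds: "\<And>T y. T' \<le> T \<Longrightarrow> y \<in> Iset \<Longrightarrow> a \<le> g T y \<and> g T y \<le> b" and "0 < a"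
    and cont: "\<And>T. T' \<le> T \<Longrightarrow> continuous_on Iset (g T)"
  shows "((\<lambda>T. ln (integral Iset (\<lambda>y. g T y powr t)) / ln T) \<longlongrightarrow> 0) at_top"
proof -
  define m K where "m = min (a powr t) (b powr t)" and "K = max (a powr t) (b powr t)"
  have "0 < m" using \<open>0 < a\<close> bounds[of "max T' 0" 1] by (auto simp: m_def Iset_def)
  define L where "L = max \<bar>ln (2 * m)\<bar> \<bar>ln (2 * K)\<bar>"
  have "\<forall>\<^sub>F T in at_top. norm (ln (integral Iset (\<lambda>y. g T y powr t)) / ln T) \<le> L / ln T"
    using eventually_ge_at_top[of "max T' 2"]
  proof eventually_elim
    case (elim T)
    have "2 * m \<le> integral Iset (\<lambda>y. g T y powr t) \<and> integral Iset (\<lambda>y. g T y powr t) \<le> 2 * K"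
    proof (rule integral_Iset_bounds)
      show "continuous_on Iset (\<lambda>y. g T y powr t)"
        using elim cont bounds \<open>0 < a\<close> by (intro continuous_intros) force+
      show "m \<le> g T y powr t \<and> g T y powr t \<le> K" if "y \<in> Iset" for y
        using powr_between_min_max[of a "g T y" b t] bounds[OF _ that, of T] elim \<open>0 < a\<close>
        by (auto simp: m_def K_def)
    qed
    then have "\<bar>ln (integral Iset (\<lambda>y. g T y powr t))\<bar> \<le> L"
      using \<open>0 < m\<close> unfolding L_def by (smt (verit) ln_le_cancel_iff)
    then show ?case using elim by (simp add: divide_right_mono)
  qed
  moreover have "((\<lambda>T. L / ln T) \<longlongrightarrow> 0) at_top"
    by (intro tendsto_divide_0[OF tendsto_const] filterlim_at_top_imp_at_infinity ln_at_top)
  ultimately show ?thesis by (rule Lim_null_comparison)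
qed

locale balanced_half_plane_map =
  fixes \<phi> :: "complex \<Rightarrow> complex" and \<rho> c C :: real
  assumes holo: "\<phi> holomorphic_on right_half_plane"
    and rho_pos: "0 < \<rho>" and c_pos: "0 < c" and C_pos: "0 < C"
    and norm_gt_1: "\<xi> \<in> right_half_plane \<Longrightarrow> 1 < norm (\<phi> \<xi>)"
    and deriv_lower: "\<xi> \<in> right_half_plane \<Longrightarrow> norm (\<phi> \<xi>) powr (1 - \<rho>) / C \<le> norm (deriv \<phi> \<xi>)"
    and deriv_upper: "\<xi> \<in> right_half_plane \<Longrightarrow> norm (deriv \<phi> \<xi>) \<le> norm (\<phi> \<xi>) powr (1 - \<rho>) / c"
begin

text \<open>Along the real axis \<open>(|\<phi>|\<^sup>\<rho>)' \<le> \<rho> |\<phi>|\<^sup>\<rho>\<^sup>-\<^sup>1 |\<phi>'| \<le> \<rho>/c\<close>.\<close>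
lemma norm_powr_at_real_le:
  assumes "1 \<le> T"
  shows "norm (\<phi> (of_real T)) powr \<rho> \<le> norm (\<phi> 1) powr \<rho> + \<rho> / c * (T - 1)"
proof -
  define h where "h = (\<lambda>s::real. norm (\<phi> (of_real s)) powr \<rho>)"
  have "\<rho> / c * 1 - h 1 \<le> \<rho> / c * T - h T"
  proof (rule DERIV_nonneg_imp_nondecreasing[OF assms])
    fix s :: real assume "1 \<le> s"
    then have s: "of_real s \<in> right_half_plane" by (simp add: right_half_plane_def)
    define w d where "w = \<phi> (of_real s)" and "d = deriv \<phi> (of_real s)"
    have "w \<noteq> 0" using norm_gt_1[OF s] by (auto simp: w_def)
    have "((\<lambda>x. \<phi> (of_real x)) has_vector_derivative d) (at s)"
      unfolding d_def using holo open_right_half_plane s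
      by (intro has_vector_derivative_real_field holomorphic_derivI) auto
    from has_derivative_compose[OF this[unfolded has_vector_derivative_def]
        has_derivative_norm[OF \<open>w \<noteq> 0\<close>, unfolded w_def]]
    have "((\<lambda>x. norm (\<phi> (of_real x))) has_real_derivative d \<bullet> sgn w) (at s)"
      by (simp add: has_field_derivative_def w_def mult_commute_abs)
    from DERIV_fun_powr[OF this, of \<rho>]
    have h_deriv: "(h has_real_derivative \<rho> * norm w powr (\<rho> - 1) * (d \<bullet> sgn w)) (at s)"
      using \<open>w \<noteq> 0\<close> by (simp add: h_def w_def)
    have "\<rho> * norm w powr (\<rho> - 1) * (d \<bullet> sgn w) \<le> \<rho> / c"
    proof -
      have "d \<bullet> sgn w \<le> norm d"
        using Cauchy_Schwarz_ineq2[of d "sgn w"] \<open>w \<noteq> 0\<close> by (simp add: norm_sgn)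
      also have "\<dots> \<le> norm w powr (1 - \<rho>) / c" using deriv_upper[OF s] by (simp add: w_def d_def)
      finally have "\<rho> * norm w powr (\<rho> - 1) * (d \<bullet> sgn w) \<le>
                      \<rho> * norm w powr (\<rho> - 1) * (norm w powr (1 - \<rho>) / c)"
        using rho_pos by (intro mult_left_mono) auto
      also have "\<dots> = \<rho> / c" using \<open>w \<noteq> 0\<close> by (simp add: powr_add[symmetric])
      finally show ?thesis .
    qed
    with DERIV_diff[OF DERIV_cmult[OF DERIV_ident, of "\<rho> / c"] h_deriv]
    show "\<exists>y. ((\<lambda>s. \<rho> / c * s - h s) has_real_derivative y) (at s) \<and> 0 \<le> y"
      by force
  qed
  then show ?thesis by (simp add: h_def algebra_simps diff_divide_distrib)
qed

end

locale regular_balanced_half_plane_map = balanced_half_plane_map +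
  fixes M T0 :: real
  assumes comparable: "\<And>T \<xi> \<xi>'. T0 \<le> T \<Longrightarrow> \<xi> \<in> Qsq T - Qsq (T/8) \<Longrightarrow> \<xi>' \<in> Qsq T - Qsq (T/8) \<Longrightarrow>
                         norm (\<phi> \<xi>) \<le> M * norm (\<phi> \<xi>')"
begin

lemma M_ge_1: "1 \<le> M"
proof -
  define T where "T = max 1 T0"
  have "of_real T \<in> Qsq T - Qsq (T/8)" by (intro of_real_mem_Qsq_annulus) (simp add: T_def)
  then have "norm (\<phi> (of_real T)) \<le> M * norm (\<phi> (of_real T))"
    using comparable[of T] by (simp add: T_def)
  moreover have "1 < norm (\<phi> (of_real T))"
    using norm_gt_1 by (simp add: T_def right_half_plane_def)
  ultimately show ?thesis by (smt (verit) mult_le_cancel_right1)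
qed

lemma norm_deriv_at_real_le:
  assumes "max 1 T0 \<le> T"
  shows "norm (deriv \<phi> (of_real T)) \<le> 4 * M * norm (\<phi> (of_real T)) / T"
proof -
  have "0 < T" using assms by simp
  have disc: "cball (of_real T) (T/4) \<subseteq> Qsq T - Qsq (T/8)"
    using cball_of_real_subset_Qsq_annulus[OF \<open>0 < T\<close>] .
  then have disc_H: "cball (of_real T) (T/4) \<subseteq> right_half_plane"
    using Qsq_subset_right_half_plane by blast
  then have "norm ((deriv ^^ 1) \<phi> (of_real T)) \<le> fact 1 * (M * norm (\<phi> (of_real T))) / (T/4) ^ 1"
  proof (intro Cauchy_inequality)
    show "\<phi> holomorphic_on ball (of_real T) (T/4)"
      by (meson holo holomorphic_on_subset ball_subset_cball subset_trans disc_H)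
    show "continuous_on (cball (of_real T) (T/4)) \<phi>"
      by (meson holo holomorphic_on_imp_continuous_on holomorphic_on_subset disc_H)
    show "norm (\<phi> x) \<le> M * norm (\<phi> (of_real T))" if "norm (of_real T - x) = T/4" for x
    proof -
      have "x \<in> cball (of_real T) (T/4)" using that by (simp add: dist_norm)
      then show ?thesis using disc assms of_real_mem_Qsq_annulus[OF \<open>0 < T\<close>]
        by (intro comparable[of T]) auto
    qed
  qed (use \<open>0 < T\<close> in auto)
  then show ?thesis by (simp add: mult_ac)
qed

lemma real_le_norm_powr:
  assumes "max 1 T0 \<le> T"
  shows "T \<le> 4 * M * C * norm (\<phi> (of_real T)) powr \<rho>"
proof -
  define p where "p = norm (\<phi> (of_real T))"
  have "1 < p" using norm_gt_1[of "of_real T"] assms by (simp add: p_def right_half_plane_def)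
  have "p powr (1 - \<rho>) / C \<le> 4 * M * p / T"
    using deriv_lower[of "of_real T"] norm_deriv_at_real_le[OF assms] assms
    by (simp add: p_def right_half_plane_def)
  then have "T * p powr (1 - \<rho>) \<le> 4 * M * C * p"
    using assms C_pos by (simp add: field_simps)
  then have "T \<le> 4 * M * C * (p / p powr (1 - \<rho>))"
    using \<open>1 < p\<close> by (simp add: field_simps)
  also have "p / p powr (1 - \<rho>) = p powr \<rho>"
    using \<open>1 < p\<close> powr_diff[of p 1 "1 - \<rho>"] by simp
  finally show ?thesis by (simp add: p_def)
qed

lemma norm_powr_at_real_le_linear:
  assumes "1 \<le> T"
  shows "norm (\<phi> (of_real T)) powr \<rho> \<le> (norm (\<phi> 1) powr \<rho> + \<rho> / c) * T"
proof -
  have "norm (\<phi> (of_real T)) powr \<rho> \<le> norm (\<phi> 1) powr \<rho> + \<rho> / c * (T - 1)"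
    by (rule norm_powr_at_real_le[OF assms])
  also have "\<dots> \<le> (norm (\<phi> 1) powr \<rho> + \<rho> / c) * T"
    using assms mult_left_mono[OF assms, of "norm (\<phi> 1) powr \<rho>"] divide_pos_pos[OF rho_pos c_pos]
    by (simp add: distrib_right right_diff_distrib)
  finally show ?thesis .
qed

lemma norm_deriv_on_annulus_bounds:
  assumes T: "max 1 T0 \<le> T" and w: "w \<in> Qsq T - Qsq (T/8)"
  defines "K \<equiv> M powr \<bar>1 - \<rho>\<bar>"
  shows "norm (\<phi> (of_real T)) powr (1 - \<rho>) / (C * K) \<le> norm (deriv \<phi> w)"
    and "norm (deriv \<phi> w) \<le> K * norm (\<phi> (of_real T)) powr (1 - \<rho>) / c"
proof -
  define p q where "p = norm (\<phi> (of_real T))" and "q = norm (\<phi> w)"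
  have T_mem: "of_real T \<in> Qsq T - Qsq (T/8)" using T by (intro of_real_mem_Qsq_annulus) simp
  have w_H: "w \<in> right_half_plane" and T_H: "of_real T \<in> right_half_plane"
    using w T_mem Qsq_subset_right_half_plane by blast+
  have "1 < p" "1 < q" using norm_gt_1 w_H T_H by (auto simp: p_def q_def)
  have "0 < K" using M_ge_1 by (simp add: K_def)
  have "T0 \<le> T" using T by simp
  have q_le: "q powr (1 - \<rho>) \<le> K * p powr (1 - \<rho>)" and p_le: "p powr (1 - \<rho>) \<le> K * q powr (1 - \<rho>)"
    unfolding K_def using \<open>1 < p\<close> \<open>1 < q\<close> M_ge_1 comparable[OF \<open>T0 \<le> T\<close> w T_mem]
      comparable[OF \<open>T0 \<le> T\<close> T_mem w]
    by (auto simp: p_def q_def intro!: powr_le_mult_powr_abs)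
  have "p powr (1 - \<rho>) / (C * K) \<le> q powr (1 - \<rho>) / C"
    using p_le \<open>0 < K\<close> C_pos by (simp add: field_simps)
  also have "\<dots> \<le> norm (deriv \<phi> w)" using deriv_lower[OF w_H] by (simp add: q_def)
  finally show "norm (\<phi> (of_real T)) powr (1 - \<rho>) / (C * K) \<le> norm (deriv \<phi> w)"
    by (simp add: p_def)
  have "norm (deriv \<phi> w) \<le> q powr (1 - \<rho>) / c" using deriv_upper[OF w_H] by (simp add: q_def)
  also have "\<dots> \<le> K * p powr (1 - \<rho>) / c" using q_le c_pos by (simp add: divide_right_mono)
  finally show "norm (deriv \<phi> w) \<le> K * norm (\<phi> (of_real T)) powr (1 - \<rho>) / c"
    by (simp add: p_def)
qed

lemma norm_deriv_phi_rescaled_bounds: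
  assumes T: "max 1 T0 \<le> T" and y: "y \<in> Iset"
  defines "K \<equiv> M powr \<bar>1 - \<rho>\<bar>" and "A \<equiv> norm (\<phi> 1) powr \<rho> + \<rho> / c"
  shows "1 / (C * K * A) \<le> norm (deriv (phi_rescaled \<phi> T) (Complex (1/T) y))"
    and "norm (deriv (phi_rescaled \<phi> T) (Complex (1/T) y)) \<le> 4 * M * C * K / c"
proof -
  define w where "w = Complex 1 (T * y)"
  define p where "p = norm (\<phi> (of_real T))"
  have "1 \<le> T" using T by simp
  have w: "w \<in> Qsq T - Qsq (T/8)"
    unfolding w_def using y \<open>1 \<le> T\<close> by (intro Complex_mem_Qsq_annulus) (auto simp: Iset_def)
  note deriv_w = norm_deriv_on_annulus_bounds[OF T w, folded K_def p_def]
  have "1 < p" using norm_gt_1[of "of_real T"] \<open>1 \<le> T\<close> by (simp add: p_def right_half_plane_def)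
  have "0 < K" "0 < A"
    using M_ge_1 divide_pos_pos[OF rho_pos c_pos] by (auto simp: K_def A_def add_nonneg_pos)
  have p_powr: "p powr (1 - \<rho>) / p = 1 / p powr \<rho>" using \<open>1 < p\<close> by (simp add: powr_diff)
  have g: "norm (deriv (phi_rescaled \<phi> T) (Complex (1/T) y)) = T * norm (deriv \<phi> w) / p"
    using deriv_phi_rescaled_on_line[OF holo, of T y] \<open>1 \<le> T\<close>
    by (simp add: w_def p_def norm_mult norm_divide)
  have "p powr \<rho> \<le> A * T"
    using norm_powr_at_real_le_linear[OF \<open>1 \<le> T\<close>] by (simp add: A_def p_def)
  have "1 / (C * K * A) = T / (C * K * (A * T))" using \<open>1 \<le> T\<close> by simp
  also have "\<dots> \<le> T / (C * K * p powr \<rho>)"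
    using \<open>p powr \<rho> \<le> A * T\<close> \<open>1 < p\<close> \<open>0 < K\<close> \<open>0 < A\<close> C_pos \<open>1 \<le> T\<close>
    by (intro divide_left_mono mult_left_mono) auto
  also have "\<dots> = T / (C * K) * (p powr (1 - \<rho>) / p)"
    unfolding p_powr by (simp add: mult_ac)
  also have "\<dots> = T * (p powr (1 - \<rho>) / (C * K)) / p" by simp
  also have "\<dots> \<le> T * norm (deriv \<phi> w) / p"
    using deriv_w(1) \<open>1 \<le> T\<close> \<open>1 < p\<close> by (intro divide_right_mono mult_left_mono) auto
  finally show "1 / (C * K * A) \<le> norm (deriv (phi_rescaled \<phi> T) (Complex (1/T) y))"
    by (simp add: g)
  have "T * norm (deriv \<phi> w) / p \<le> T * (K * p powr (1 - \<rho>) / c) / p"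
    using deriv_w(2) \<open>1 \<le> T\<close> \<open>1 < p\<close> by (intro divide_right_mono mult_left_mono) auto
  also have "\<dots> = K * T / c * (p powr (1 - \<rho>) / p)" by simp
  also have "\<dots> = K / c * (T / p powr \<rho>)" unfolding p_powr by simp
  also have "\<dots> \<le> K / c * (4 * M * C)"
    using real_le_norm_powr[OF T] \<open>1 < p\<close> \<open>0 < K\<close> c_pos
    by (intro mult_left_mono) (auto simp: p_def divide_le_eq mult_ac)
  finally show "norm (deriv (phi_rescaled \<phi> T) (Complex (1/T) y)) \<le> 4 * M * C * K / c"
    by (simp add: g mult_ac)
qed

lemma continuous_on_norm_deriv_phi_rescaled:
  assumes "0 < T"
  shows "continuous_on UNIV (\<lambda>y. norm (deriv (phi_rescaled \<phi> T) (Complex (1/T) y)))"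
proof -
  have "continuous_on UNIV (\<lambda>y::real. Complex 1 (T * y))"
    unfolding Complex_eq by (intro continuous_intros)
  then have "continuous_on UNIV (\<lambda>y. deriv \<phi> (Complex 1 (T * y)))"
    by (rule continuous_on_compose2[OF holomorphic_on_imp_continuous_on[OF
          holomorphic_deriv[OF holo open_right_half_plane]]]) (auto simp: right_half_plane_def)
  moreover have "\<phi> (of_real T) \<noteq> 0"
    using norm_gt_1[of "of_real T"] assms by (auto simp: right_half_plane_def)
  ultimately show ?thesis
    unfolding deriv_phi_rescaled_on_line[OF holo assms] by (intro continuous_intros) simp_all
qed

lemma beta_inf_j_eq_0: "beta_inf_j \<phi> t = 0"
proof -
  define g where "g T y = norm (deriv (phi_rescaled \<phi> T) (Complex (1/T) y))" for T y
  define K where "K = M powr \<bar>1 - \<rho>\<bar>"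
  define A where "A = norm (\<phi> 1) powr \<rho> + \<rho> / c"
  have "0 < 1 / (C * K * A)"
    using M_ge_1 C_pos divide_pos_pos[OF rho_pos c_pos] by (simp add: K_def A_def add_nonneg_pos)
  moreover have "1 / (C * K * A) \<le> g T y \<and> g T y \<le> 4 * M * C * K / c"
    if "max 1 T0 \<le> T" "y \<in> Iset" for T y
    using norm_deriv_phi_rescaled_bounds[OF that] unfolding g_def K_def A_def by blast
  moreover have "continuous_on Iset (g T)" if "max 1 T0 \<le> T" for T
    using continuous_on_norm_deriv_phi_rescaled[of T] that
    unfolding g_def by (auto intro: continuous_on_subset)
  ultimately have "((\<lambda>T. ln (integral Iset (\<lambda>y. g T y powr t)) / ln T) \<longlongrightarrow> 0) at_top"
    by (intro ln_integral_Iset_over_ln_tendsto_0[where T' = "max 1 T0"]) blast+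
  then have "((\<lambda>T. ereal (beta_fun (phi_rescaled \<phi> T) (1/T) t)) \<longlongrightarrow> ereal 0) at_top"
    by (simp add: beta_fun_def g_def)
  then show ?thesis
    by (simp add: beta_inf_j_def lim_imp_Limsup zero_ereal_def)
qed

end

lemma class_D_imp_common_D_conditions:
  "class_D f N \<Omega> \<tau> \<phi> \<Longrightarrow> common_D_conditions f N \<Omega> \<tau> \<phi>"
  by (auto simp: class_D_def class_D_entire_def class_D_model_def)

lemma class_D_open_tract:
  assumes "class_D f N \<Omega> \<tau> \<phi>" "j < N"
  shows "open (\<Omega> j)"
  using assms(1) unfolding class_D_def
proof
  assume entire: "class_D_entire f N \<Omega> \<tau> \<phi>"
  then have "continuous_on UNIV f"
    unfolding class_D_entire_def using holomorphic_on_imp_continuous_on by blast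
  then have "open {z. 1 < norm (f z)}" by (intro open_Collect_less continuous_intros) auto
  moreover have "\<Omega> j \<in> components {z. 1 < norm (f z)}"
    using entire assms(2) unfolding class_D_entire_def by blast
  ultimately show ?thesis by (rule open_components)
next
  assume "class_D_model f N \<Omega> \<tau> \<phi>"
  then show ?thesis using assms(2) unfolding class_D_model_def by blast
qed

lemma class_D_balanced_growth_imp_beta_inf_j_eq_0:
  assumes D: "class_D f N \<Omega> \<tau> \<phi>" and "balanced_growth f (\<Union>j<N. \<Omega> j)" and j: "j < N"
  shows "beta_inf_j (\<phi> j) t = 0"
proof -
  have \<Omega>_sub: "\<Omega> j \<subseteq> (\<Union>j<N. \<Omega> j)" using j by blast
  obtain \<rho> c C where "0 < \<rho>" "0 < c" "0 < C" and bg: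
    "\<forall>z\<in>\<Omega> j. c * (norm (f z) * norm z powr (\<rho> - 1)) \<le> norm (deriv f z) \<and>
               norm (deriv f z) \<le> C * (norm (f z) * norm z powr (\<rho> - 1))"
    using assms(2) \<Omega>_sub unfolding balanced_growth_def by (meson subsetD)
  note common = class_D_imp_common_D_conditions[OF D, unfolded common_D_conditions_def]
  have conf: "conformal_onto_H (\<Omega> j) (\<tau> j) (\<phi> j)"
    and f_eq: "\<forall>z\<in>\<Omega> j. f z = exp (\<tau> j z)" using common j by blast+
  obtain M T0 where comparable: "\<forall>T\<ge>T0. \<forall>\<xi>\<in>Qsq T - Qsq (T/8). \<forall>\<xi>'\<in>Qsq T - Qsq (T/8).
      norm (\<phi> j \<xi>) \<le> M * norm (\<phi> j \<xi>')" using common j by blast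
  have outside: "\<forall>z\<in>\<Omega> j. 1 < norm z"
  proof
    fix z assume "z \<in> \<Omega> j"
    then have "z \<in> closure (\<Union>j<N. \<Omega> j)" using \<Omega>_sub closure_subset by blast
    then have "z \<notin> cball 0 1" using common by blast
    then show "1 < norm z" by simp
  qed
  have norm_gt_1: "1 < norm (\<phi> j \<xi>)" if "\<xi> \<in> right_half_plane" for \<xi>
    using outside conf that unfolding conformal_onto_H_def by blast
  have "0 \<notin> \<Omega> j" using outside by force
  note deriv_bounds = balanced_growth_inverse_deriv_bounds[OF conf class_D_open_tract[OF D j] f_eq
      this \<open>0 < c\<close> \<open>0 < C\<close> bg]
  interpret regular_balanced_half_plane_map "\<phi> j" \<rho> c C M T0
    using conf comparable norm_gt_1 deriv_bounds \<open>0 < \<rho>\<close> \<open>0 < c\<close> \<open>0 < C\<close>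
    by unfold_locales (auto simp: conformal_onto_H_def)
  show ?thesis by (rule beta_inf_j_eq_0)
qed

lemma spectrum_if_beta_inf_j_eq_0:
  assumes "1 \<le> N" and beta: "\<And>j t. j < N \<Longrightarrow> beta_inf_j (\<phi> j) t = 0"
  shows "(\<forall>t. beta_inf N \<phi> t = 0) \<and> (\<forall>t. b_inf N \<phi> t = ereal (1 - t)) \<and>
         negative_spectrum N \<phi> \<and> Theta N \<phi> = 1"
proof -
  have "{..<N} \<noteq> {}" using assms(1) lessThan_empty_iff by (metis not_one_le_zero)
  have beta_inf: "beta_inf N \<phi> t = 0" for t
  proof -
    have "(\<lambda>j. beta_inf_j (\<phi> j) t) ` {..<N} = (\<lambda>_. 0) ` {..<N}"
      using beta by (intro image_cong) auto
    then show ?thesis using \<open>{..<N} \<noteq> {}\<close> by (simp add: beta_inf_def)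
  qed
  have b_inf: "b_inf N \<phi> t = ereal (1 - t)" for t
    by (simp add: b_inf_def beta_inf one_ereal_def)
  have "{t. 0 < t \<and> beta_inf_j (\<phi> j) t - ereal t + 1 = 0} = {1}" if "j < N" for j
    using beta[OF that] by (auto simp: one_ereal_def)
  then have "(\<lambda>j. Theta_j (\<phi> j)) ` {..<N} = (\<lambda>_. 1) ` {..<N}"
    by (intro image_cong) (auto simp: Theta_j_def)
  then have Theta: "Theta N \<phi> = 1" using \<open>{..<N} \<noteq> {}\<close> by (simp add: Theta_def)
  show ?thesis
    using beta_inf b_inf Theta by (auto simp: negative_spectrum_def)
qed

theorem proposition5p2:
  fixes f :: "complex \<Rightarrow> complex" and N :: nat and \<Omega> :: "nat \<Rightarrow> complex set"
    and \<tau> \<phi> :: "nat \<Rightarrow> complex \<Rightarrow> complex"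
  assumes "class_D f N \<Omega> \<tau> \<phi>"
    and "balanced_growth f (\<Union>j<N. \<Omega> j)"
  shows "(\<forall>t. beta_inf N \<phi> t = 0) \<and> (\<forall>t. b_inf N \<phi> t = ereal (1 - t)) \<and>
         negative_spectrum N \<phi> \<and> Theta N \<phi> = 1"
proof (rule spectrum_if_beta_inf_j_eq_0)
  show "1 \<le> N"
    using class_D_imp_common_D_conditions[OF assms(1)] by (simp add: common_D_conditions_def)
  show "beta_inf_j (\<phi> j) t = 0" if "j < N" for j t
    using class_D_balanced_growth_imp_beta_inf_j_eq_0[OF assms that] .
qed

end
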